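(* Let $G$ be a finite simple graph whose vertices carry positive integer weights, let $t\in\mathbb{N}$, and let $v\in V(G)$ have weight $t$. Let $G(v)$ denote the weighted graph obtained from $G$ by replacing $v$ with an independent set $\{v_1,\dots,v_t\}$ of $t$ new vertices, each of weight $1$, where each $v_j$ is adjacent to exactly the vertices $w$ that were adjacent to $v$ in $G$; all other vertices, edges and weights are unchanged. Then weighted Grim played on $G$ and weighted Grim played on $G(v)$ have the same outcome: $G$ is an $\mathcal{N}$ position if and only if $G(v)$ is an $\mathcal{N}$ position.
   Context: Grim is a two-player game on a finite simple undirected graph. Any isolated vertices of the starting graph are deleted before play begins. Players alternate moves; in ordinary (unweighted) Grim a move consists of selecting a vertex of the current graph and deleting it together with all its incident edges, after which every vertex that has become isolated is also deleted. The player who makes the last legal move wins (a player facing the empty graph has no move and loses). In weighted Grim each vertex carries a positive integer weight; a vertex of weight $t$ is deleted only once it has been selected $t$ times (each selection is a move and lowers its remaining weight by one, the selection that brings it to zero deleting it with its incident edges), or when it becomes isolated, in which case it is deleted; ordinary Grim is weighted Grim with all weights equal to $1$. A position is an $\mathcal{N}$ position if the player about to move has a winning strategy, and a $\mathcal{P}$ position otherwise. *)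

theory Defs
  imports Main
begin

text \<open>A simple graph is given by a symmetric irreflexive edge
relation E on a vertex type; a position of the game is the current (finite)
vertex set V together with the current remaining weights w (only the values
on V matter).  The current graph is the subgraph induced by E on V.\<close>

definition grim_isolated :: "('a \<Rightarrow> 'a \<Rightarrow> bool) \<Rightarrow> 'a set \<Rightarrow> 'a \<Rightarrow> bool" where
  "grim_isolated E V x \<longleftrightarrow> \<not> (\<exists>u\<in>V. E x u)"

definition grim_clean :: "('a \<Rightarrow> 'a \<Rightarrow> bool) \<Rightarrow> 'a set \<Rightarrow> 'a set" where
  "grim_clean E V = {x \<in> V. \<not> grim_isolated E V x}"

definition grim_move :: "('a \<Rightarrow> 'a \<Rightarrow> bool) \<Rightarrow> 'a set \<Rightarrow> ('a \<Rightarrow> nat)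
      \<Rightarrow> 'a set \<Rightarrow> ('a \<Rightarrow> nat) \<Rightarrow> bool" where
  "grim_move E V w V' w' \<longleftrightarrow>
     (\<exists>x\<in>V. (1 < w x \<and> V' = V \<and> w' = w(x := w x - 1))
          \<or> (w x \<le> 1 \<and> V' = grim_clean E (V - {x}) \<and> w' = w))"

text \<open>N positions (player to move wins) and P positions (player to move loses),
normal play convention.\<close>
inductive grim_N :: "('a \<Rightarrow> 'a \<Rightarrow> bool) \<Rightarrow> 'a set \<Rightarrow> ('a \<Rightarrow> nat) \<Rightarrow> bool"
  and grim_P :: "('a \<Rightarrow> 'a \<Rightarrow> bool) \<Rightarrow> 'a set \<Rightarrow> ('a \<Rightarrow> nat) \<Rightarrow> bool"
  for E where
  N_intro: "grim_move E V w V' w' \<Longrightarrow> grim_P E V' w' \<Longrightarrow> grim_N E V w"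
| P_intro: "(\<forall>V' w'. grim_move E V w V' w' \<longrightarrow> grim_N E V' w') \<Longrightarrow> grim_P E V w"

definition weighted_grim_N :: "'a set \<Rightarrow> ('a \<Rightarrow> 'a \<Rightarrow> bool) \<Rightarrow> ('a \<Rightarrow> nat) \<Rightarrow> bool" where
  "weighted_grim_N V E w \<longleftrightarrow> grim_N E (grim_clean E V) w"

definition split_V :: "'a set \<Rightarrow> 'a \<Rightarrow> nat \<Rightarrow> ('a + nat) set" where
  "split_V V v t = Inl ` (V - {v}) \<union> Inr ` {1..t}"

fun split_E :: "('a \<Rightarrow> 'a \<Rightarrow> bool) \<Rightarrow> 'a \<Rightarrow> ('a + nat) \<Rightarrow> ('a + nat) \<Rightarrow> bool" where
  "split_E E v (Inl a) (Inl b) = E a b"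
| "split_E E v (Inl a) (Inr j) = E a v"
| "split_E E v (Inr i) (Inl b) = E v b"
| "split_E E v (Inr i) (Inr j) = False"

fun split_w :: "('a \<Rightarrow> nat) \<Rightarrow> ('a + nat) \<Rightarrow> nat" where
  "split_w w (Inl a) = w a"
| "split_w w (Inr j) = 1"

end

theory Submission
  imports Defs
begin

text \<open>A move at a vertex other than v in G is mirrored in G(v) by the same move, and
a move at v (lowering its weight, or deleting it when the weight is 1) by deleting one of
the remaining copies of v.  Keeping as many copies of v as its remaining weight, this is a
bisimulation between the two games.  It respects the removal of isolated vertices because a
copy of v is isolated exactly when v is, and deleting the last copy of v deletes v.\<close>

lemma grim_clean_subset: "grim_clean E V \<subseteq> V"
  unfolding grim_clean_def by blast

lemma grim_clean_idem:
  assumes "\<And>x y. E x y \<Longrightarrow> E y x"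
  shows "grim_clean E (grim_clean E V) = grim_clean E V"
  using assms unfolding grim_clean_def grim_isolated_def by blast

definition grim_select :: "('a \<Rightarrow> 'a \<Rightarrow> bool) \<Rightarrow> 'a set \<Rightarrow> ('a \<Rightarrow> nat) \<Rightarrow> 'a
      \<Rightarrow> 'a set \<times> ('a \<Rightarrow> nat)" where
  "grim_select E V w x =
     (if 1 < w x then (V, w(x := w x - 1)) else (grim_clean E (V - {x}), w))"

lemma grim_select_decrement: "1 < w x \<Longrightarrow> grim_select E V w x = (V, w(x := w x - 1))"
  unfolding grim_select_def by simp

lemma grim_select_delete: "w x \<le> 1 \<Longrightarrow> grim_select E V w x = (grim_clean E (V - {x}), w)"
  unfolding grim_select_def by simp

lemma grim_move_iff_select:
  "grim_move E V w V' w' \<longleftrightarrow> (\<exists>x\<in>V. grim_select E V w x = (V', w'))"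
  unfolding grim_move_def grim_select_def by (intro bex_cong refl) auto

lemma grim_N_transfer:
  assumes fwd: "\<And>A w B u A' w'. R (A, w) (B, u) \<Longrightarrow> grim_move Ga A w A' w' \<Longrightarrow>
                  \<exists>B' u'. grim_move Gb B u B' u' \<and> R (A', w') (B', u')"
    and bwd: "\<And>A w B u B' u'. R (A, w) (B, u) \<Longrightarrow> grim_move Gb B u B' u' \<Longrightarrow>
                  \<exists>A' w'. grim_move Ga A w A' w' \<and> R (A', w') (B', u')"
  shows "grim_N Ga A w \<Longrightarrow> R (A, w) (B, u) \<Longrightarrow> grim_N Gb B u"
    and "grim_P Ga A w \<Longrightarrow> R (A, w) (B, u) \<Longrightarrow> grim_P Gb B u"
proof (induction arbitrary: B u and B u rule: grim_N_grim_P.inducts)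
  case (N_intro A w A' w')
  then obtain B' u' where "grim_move Gb B u B' u'" "R (A', w') (B', u')"
    using fwd by blast
  then show ?case using N_intro grim_N_grim_P.N_intro by blast
next
  case (P_intro A w)
  show ?case
  proof (rule grim_N_grim_P.P_intro, intro allI impI)
    fix B' u' assume "grim_move Gb B u B' u'"
    then obtain A' w' where "grim_move Ga A w A' w'" "R (A', w') (B', u')"
      using bwd P_intro by blast
    then show "grim_N Gb B' u'" using P_intro by blast
  qed
qed

lemma grim_N_bisimilar:
  assumes "\<And>A w B u A' w'. R (A, w) (B, u) \<Longrightarrow> grim_move Ga A w A' w' \<Longrightarrow>
             \<exists>B' u'. grim_move Gb B u B' u' \<and> R (A', w') (B', u')"
    and "\<And>A w B u B' u'. R (A, w) (B, u) \<Longrightarrow> grim_move Gb B u B' u' \<Longrightarrow>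
             \<exists>A' w'. grim_move Ga A w A' w' \<and> R (A', w') (B', u')"
    and "R (A, w) (B, u)"
  shows "grim_N Ga A w \<longleftrightarrow> grim_N Gb B u"
proof
  show "grim_N Ga A w \<Longrightarrow> grim_N Gb B u"
    using grim_N_transfer(1)[of R Ga Gb] assms by blast
  show "grim_N Gb B u \<Longrightarrow> grim_N Ga A w"
    using grim_N_transfer(1)[of "\<lambda>q p. R p q" Gb Ga] assms by blast
qed

definition split_pos :: "'a \<Rightarrow> 'a set \<Rightarrow> nat set \<Rightarrow> ('a + nat) set" where
  "split_pos v A S = Inl ` (A - {v}) \<union> Inr ` S"

lemma grim_clean_split_pos:
  assumes "\<And>x. \<not> E x x" and "S = {} \<longleftrightarrow> v \<notin> A"
  shows "grim_clean (split_E E v) (split_pos v A S)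
           = split_pos v (grim_clean E A) (if v \<in> grim_clean E A then S else {})"
proof (rule set_eqI)
  fix y show "y \<in> grim_clean (split_E E v) (split_pos v A S) \<longleftrightarrow>
      y \<in> split_pos v (grim_clean E A) (if v \<in> grim_clean E A then S else {})"
    using assms by (cases y) (auto simp: split_pos_def grim_clean_def grim_isolated_def bex_Un)
qed

lemma split_pos_Diff_Inl: "x \<noteq> v \<Longrightarrow> split_pos v A S - {Inl x} = split_pos v (A - {x}) S"
  unfolding split_pos_def by auto

lemma split_pos_Diff_Inr: "split_pos v A S - {Inr j} = split_pos v A (S - {j})"
  unfolding split_pos_def by auto

definition split_inv :: "('a \<Rightarrow> 'a \<Rightarrow> bool) \<Rightarrow> 'a \<Rightarrow> 'a set \<Rightarrow> ('a \<Rightarrow> nat)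
      \<Rightarrow> nat set \<Rightarrow> ('a + nat \<Rightarrow> nat) \<Rightarrow> bool" where
  "split_inv E v A w S u \<longleftrightarrow> grim_clean E A = A \<and> finite S \<and> (S = {} \<longleftrightarrow> v \<notin> A)
     \<and> (v \<in> A \<longrightarrow> card S = w v)
     \<and> (\<forall>a\<in>A - {v}. u (Inl a) = w a) \<and> (\<forall>j\<in>S. u (Inr j) \<le> 1)"

fun split_sim :: "('a \<Rightarrow> 'a \<Rightarrow> bool) \<Rightarrow> 'a \<Rightarrow> 'a set \<times> ('a \<Rightarrow> nat)
      \<Rightarrow> ('a + nat) set \<times> ('a + nat \<Rightarrow> nat) \<Rightarrow> bool" where
  "split_sim E v (A, w) (B, u) \<longleftrightarrow> (\<exists>S. B = split_pos v A S \<and> split_inv E v A w S u)"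

lemma split_sim_intro: "split_inv E v A w S u \<Longrightarrow> split_sim E v (A, w) (split_pos v A S, u)"
  by auto

fun unsplit :: "'a \<Rightarrow> 'a + nat \<Rightarrow> 'a" where
  "unsplit v (Inl a) = a"
| "unsplit v (Inr j) = v"

lemma unsplit_image_split_pos:
  assumes "S = {} \<longleftrightarrow> v \<notin> A"
  shows "unsplit v ` split_pos v A S = A"
proof
  show "unsplit v ` split_pos v A S \<subseteq> A"
    using assms by (auto simp: split_pos_def)
  show "A \<subseteq> unsplit v ` split_pos v A S"
  proof
    fix x assume "x \<in> A"
    show "x \<in> unsplit v ` split_pos v A S"
    proof (cases "x = v")
      case True
      with \<open>x \<in> A\<close> assms obtain j where "j \<in> S" by blast
      then show ?thesis
        using True by (intro image_eqI[of _ _ "Inr j"]) (simp_all add: split_pos_def)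
    next
      case False
      then show ?thesis
        using \<open>x \<in> A\<close> by (intro image_eqI[of _ _ "Inl x"]) (simp_all add: split_pos_def)
    qed
  qed
qed

lemma split_inv_restrict:
  assumes "split_inv E v A w S u" and "A' \<subseteq> A" and "grim_clean E A' = A'"
  shows "split_inv E v A' w (if v \<in> A' then S else {}) u"
  using assms unfolding split_inv_def by (cases "v \<in> A'") auto

lemma split_select:
  assumes sym: "\<And>x y. E x y \<Longrightarrow> E y x" and irr: "\<And>x. \<not> E x x"
    and inv: "split_inv E v A w S u" and y: "y \<in> split_pos v A S"
  shows "split_sim E v (grim_select E A w (unsplit v y))
           (grim_select (split_E E v) (split_pos v A S) u y)"
proof (cases y)
  case (Inl x)
  have x: "x \<in> A" "x \<noteq> v" and ux: "u (Inl x) = w x"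
    using y inv Inl by (auto simp: split_pos_def split_inv_def)
  show ?thesis
  proof (cases "1 < w x")
    case True
    have "split_inv E v A (w(x := w x - 1)) S (u(Inl x := w x - 1))"
      using inv x by (auto simp: split_inv_def)
    then show ?thesis
      using True ux split_sim_intro unfolding Inl by (simp add: grim_select_decrement)
  next
    case False
    define A' where "A' = grim_clean E (A - {x})"
    have A': "A' \<subseteq> A" "grim_clean E A' = A'"
      using grim_clean_subset[of E "A - {x}"] grim_clean_idem[of E "A - {x}", OF sym]
      unfolding A'_def by auto
    have "S = {} \<longleftrightarrow> v \<notin> A - {x}" using inv x by (auto simp: split_inv_def)
    then have "grim_clean (split_E E v) (split_pos v A S - {Inl x})
                 = split_pos v A' (if v \<in> A' then S else {})"
      by (simp add: x split_pos_Diff_Inl grim_clean_split_pos[of E, OF irr] A'_def)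
    then have "grim_select (split_E E v) (split_pos v A S) u (Inl x)
                 = (split_pos v A' (if v \<in> A' then S else {}), u)"
      using False ux by (simp add: grim_select_delete)
    moreover have "grim_select E A w x = (A', w)"
      using False by (simp add: grim_select_delete A'_def)
    moreover have "split_inv E v A' w (if v \<in> A' then S else {}) u"
      using inv A' by (rule split_inv_restrict)
    ultimately show ?thesis
      unfolding Inl unsplit.simps by (simp only: split_sim_intro)
  qed
next
  case (Inr j)
  have j: "j \<in> S" and v: "v \<in> A" and cS: "card S = w v" and uj: "u (Inr j) \<le> 1"
    using y inv Inr by (auto simp: split_pos_def split_inv_def)
  have select_copy: "grim_select (split_E E v) (split_pos v A S) u (Inr j)
      = (grim_clean (split_E E v) (split_pos v A (S - {j})), u)"
    using uj by (simp add: grim_select_delete split_pos_Diff_Inr)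
  show ?thesis
  proof (cases "1 < w v")
    case True
    have "S - {j} \<noteq> {}"
    proof
      assume "S - {j} = {}"
      then have "S = {j}" using j by blast
      then show False using True cS by simp
    qed
    then have "grim_clean (split_E E v) (split_pos v A (S - {j})) = split_pos v A (S - {j})"
      using inv v by (simp add: grim_clean_split_pos[of E, OF irr] split_inv_def)
    moreover have "split_inv E v A (w(v := w v - 1)) (S - {j}) u"
      using inv v j True \<open>S - {j} \<noteq> {}\<close> by (auto simp: split_inv_def)
    ultimately show ?thesis
      using True select_copy split_sim_intro unfolding Inr by (simp add: grim_select_decrement)
  next
    case False
    define A' where "A' = grim_clean E (A - {v})"
    have A': "A' \<subseteq> A" "grim_clean E A' = A'" "v \<notin> A'"
      using grim_clean_subset[of E "A - {v}"] grim_clean_idem[of E "A - {v}", OF sym]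
      unfolding A'_def by auto
    have "0 < card S" using j inv by (auto simp: split_inv_def card_gt_0_iff)
    then have "card S = 1" using False cS by simp
    then have "S = {j}" using j by (auto simp: card_1_singleton_iff)
    then have "split_pos v A (S - {j}) = split_pos v (A - {v}) {}"
      by (auto simp: split_pos_def)
    then have "grim_clean (split_E E v) (split_pos v A (S - {j})) = split_pos v A' {}"
      by (simp add: grim_clean_split_pos[of E, OF irr] A'_def)
    moreover have "split_inv E v A' w {} u"
      using split_inv_restrict[OF inv A'(1,2)] A'(3) by simp
    ultimately show ?thesis
      using False select_copy split_sim_intro unfolding Inr by (simp add: grim_select_delete A'_def)
  qed
qed

lemma split_sim_forward:
  assumes sym: "\<And>x y. E x y \<Longrightarrow> E y x" and irr: "\<And>x. \<not> E x x"
    and sim: "split_sim E v (A, w) (B, u)" and move: "grim_move E A w A' w'"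
  shows "\<exists>B' u'. grim_move (split_E E v) B u B' u' \<and> split_sim E v (A', w') (B', u')"
proof -
  obtain S where B: "B = split_pos v A S" and inv: "split_inv E v A w S u"
    using sim by auto
  obtain x where "x \<in> A" and x: "grim_select E A w x = (A', w')"
    using move unfolding grim_move_iff_select by blast
  moreover have "unsplit v ` B = A"
    unfolding B using inv by (simp add: split_inv_def unsplit_image_split_pos)
  ultimately obtain y where "y \<in> B" and "unsplit v y = x" by blast
  obtain B' u' where y: "grim_select (split_E E v) B u y = (B', u')"
    by (cases "grim_select (split_E E v) B u y")
  have "grim_move (split_E E v) B u B' u'"
    unfolding grim_move_iff_select using \<open>y \<in> B\<close> y by blast
  moreover have "split_sim E v (grim_select E A w (unsplit v y)) (grim_select (split_E E v) B u y)"
    using split_select[OF sym irr inv] \<open>y \<in> B\<close> unfolding B by blast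
  then have "split_sim E v (A', w') (B', u')"
    using \<open>unsplit v y = x\<close> x y by (simp only:)
  ultimately show ?thesis by blast
qed

lemma split_sim_backward:
  assumes sym: "\<And>x y. E x y \<Longrightarrow> E y x" and irr: "\<And>x. \<not> E x x"
    and sim: "split_sim E v (A, w) (B, u)" and move: "grim_move (split_E E v) B u B' u'"
  shows "\<exists>A' w'. grim_move E A w A' w' \<and> split_sim E v (A', w') (B', u')"
proof -
  obtain S where B: "B = split_pos v A S" and inv: "split_inv E v A w S u"
    using sim by auto
  obtain y where "y \<in> B" and y: "grim_select (split_E E v) B u y = (B', u')"
    using move unfolding grim_move_iff_select by blast
  moreover have "unsplit v ` B = A"
    unfolding B using inv by (simp add: split_inv_def unsplit_image_split_pos)
  ultimately have "unsplit v y \<in> A" by blast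
  obtain A' w' where x: "grim_select E A w (unsplit v y) = (A', w')"
    by (cases "grim_select E A w (unsplit v y)")
  have "grim_move E A w A' w'"
    unfolding grim_move_iff_select using \<open>unsplit v y \<in> A\<close> x by blast
  moreover have "split_sim E v (grim_select E A w (unsplit v y)) (grim_select (split_E E v) B u y)"
    using split_select[OF sym irr inv] \<open>y \<in> B\<close> unfolding B by blast
  then have "split_sim E v (A', w') (B', u')"
    using x y by (simp only:)
  ultimately show ?thesis by blast
qed

lemma split_sim_initial:
  assumes sym: "\<And>x y. E x y \<Longrightarrow> E y x" and irr: "\<And>x. \<not> E x x"
    and "v \<in> V" and "0 < t" and "w v = t"
  shows "split_sim E v (grim_clean E V, w)
           (grim_clean (split_E E v) (split_V V v t), split_w w)"
proof -
  define A where "A = grim_clean E V"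
  have "split_V V v t = split_pos v V {1..t}"
    unfolding split_V_def split_pos_def ..
  moreover have "{1..t} = {} \<longleftrightarrow> v \<notin> V" using assms by simp
  ultimately have "grim_clean (split_E E v) (split_V V v t)
                     = split_pos v A (if v \<in> A then {1..t} else {})"
    by (simp add: grim_clean_split_pos[of E, OF irr] A_def)
  moreover have "split_inv E v A w (if v \<in> A then {1..t} else {}) (split_w w)"
    using assms grim_clean_idem[of E V, OF sym] by (simp add: split_inv_def A_def)
  ultimately show ?thesis unfolding A_def by (simp only: split_sim_intro)
qed

theorem lemma2p2:
  fixes V :: "'a set" and E :: "'a \<Rightarrow> 'a \<Rightarrow> bool" and w :: "'a \<Rightarrow> nat"
    and v :: 'a and t :: nat
  assumes "finite V"
    and "\<And>x y. E x y \<Longrightarrow> E y x"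
    and "\<And>x. \<not> E x x"
    and "\<And>x. x \<in> V \<Longrightarrow> 0 < w x"
    and "v \<in> V"
    and "w v = t"
  shows "weighted_grim_N V E w \<longleftrightarrow>
         weighted_grim_N (split_V V v t) (split_E E v) (split_w w)"
  unfolding weighted_grim_N_def
proof (rule grim_N_bisimilar[where R = "split_sim E v"])
  show "split_sim E v (grim_clean E V, w)
          (grim_clean (split_E E v) (split_V V v t), split_w w)"
    using assms by (intro split_sim_initial) auto
next
  fix A w B u A' w'
  assume "split_sim E v (A, w) (B, u)" and "grim_move E A w A' w'"
  with assms(2,3) show "\<exists>B' u'. grim_move (split_E E v) B u B' u' \<and> split_sim E v (A', w') (B', u')"
    by (rule split_sim_forward)
next
  fix A w B u B' u'
  assume "split_sim E v (A, w) (B, u)" and "grim_move (split_E E v) B u B' u'"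
  with assms(2,3) show "\<exists>A' w'. grim_move E A w A' w' \<and> split_sim E v (A', w') (B', u')"
    by (rule split_sim_backward)
qed

end
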